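(* Let $k$ be a field, $X$ a non-empty set, and for every $a\in X$ let $\sigma_a,\tau_a:X\to X$ be maps. Let ${\cal A}$ be the basic set-theoretic Yang–Baxter algebra associated with these data, i.e. the unital associative $k$-algebra generated by $1_{\cal A}$, $h_a$, $w_a$, $w_a^{-1}$ ($a\in X$) subject to the relations, for all $a,b\in X$, \[h_ah_b=\delta_{a,b}h_a,\quad w_a^{-1}w_a=w_aw_a^{-1}=1_{\cal A},\quad w_aw_b=w_{\sigma_a(b)}w_{\tau_b(a)},\quad w_ah_b=h_{\sigma_a(b)}w_a.\] Then for all $a,b,c\in X$, \[h_{\sigma_{\sigma_a(b)}(\sigma_{\tau_b(a)}(c))}=h_{\sigma_a(\sigma_b(c))}.\] If, in addition, $h_a=h_b$ implies $a=b$ for all $a,b\in X$, then for all $a,b,c\in X$, \[\sigma_a(\sigma_b(c))=\sigma_{\sigma_a(b)}(\sigma_{\tau_b(a)}(c)),\] and each $\sigma_a:X\to X$ is injective. *)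

theory Defs
  imports Main "HOL-Library.Poly_Mapping"
begin

text \<open>Words over an alphabet, as a (non-commutative) monoid under concatenation.
  The free unital associative k-algebra on an alphabet is then
  the type ('g word =>0 'k) with convolution product.\<close>

datatype 'g word = Word "'g list"

instantiation word :: (type) monoid_add
begin
definition zero_word :: "'g word" where "zero_word = Word []"
fun plus_word :: "'g word \<Rightarrow> 'g word \<Rightarrow> 'g word" where
  "plus_word (Word u) (Word v) = Word (u @ v)"
instance
proof
  fix a b c :: "'g word"
  show "a + b + c = a + (b + c)" by (cases a; cases b; cases c) simp
  show "0 + a = a" by (cases a) (simp add: zero_word_def)
  show "a + 0 = a" by (cases a) (simp add: zero_word_def)
qed
end

type_synonym ('g, 'k) free_alg = "'g word \<Rightarrow>\<^sub>0 'k"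

definition gen :: "'g \<Rightarrow> ('g, 'k::field) free_alg" where
  "gen g = Poly_Mapping.single (Word [g]) 1"

inductive_set two_sided_ideal :: "'a::ring_1 set \<Rightarrow> 'a set" for R where
  base: "r \<in> R \<Longrightarrow> r \<in> two_sided_ideal R"
| zero: "0 \<in> two_sided_ideal R"
| add: "x \<in> two_sided_ideal R \<Longrightarrow> y \<in> two_sided_ideal R \<Longrightarrow> x + y \<in> two_sided_ideal R"
| mult: "x \<in> two_sided_ideal R \<Longrightarrow> a * x * b \<in> two_sided_ideal R"

datatype 'x ybgen = H 'x | W 'x | Winv 'x

definition hA :: "'x \<Rightarrow> ('x ybgen, 'k::field) free_alg" where "hA a = gen (H a)"
definition wA :: "'x \<Rightarrow> ('x ybgen, 'k::field) free_alg" where "wA a = gen (W a)"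
definition wiA :: "'x \<Rightarrow> ('x ybgen, 'k::field) free_alg" where "wiA a = gen (Winv a)"

text \<open>Defining relations (as elements r, meaning r = 0), where
  sigma a b = sigma_a(b) and tau b a = tau_b(a).\<close>
definition yb_relations ::
  "('x \<Rightarrow> 'x \<Rightarrow> 'x) \<Rightarrow> ('x \<Rightarrow> 'x \<Rightarrow> 'x) \<Rightarrow> ('x ybgen, 'k::field) free_alg set" where
  "yb_relations sigma tau =
     {hA a * hA b - (if a = b then hA a else 0) | a b. True}
   \<union> {wiA a * wA a - 1 | a. True}
   \<union> {wA a * wiA a - 1 | a. True}
   \<union> {wA a * wA b - wA (sigma a b) * wA (tau b a) | a b. True}
   \<union> {wA a * hA b - hA (sigma a b) * wA a | a b. True}"

text \<open>The ideal of relations; the algebra A is the quotient of the free algebra by it.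
  Two elements are equal in A iff their difference lies in this ideal.\<close>
definition yb_ideal ::
  "('x \<Rightarrow> 'x \<Rightarrow> 'x) \<Rightarrow> ('x \<Rightarrow> 'x \<Rightarrow> 'x) \<Rightarrow> ('x ybgen, 'k::field) free_alg set" where
  "yb_ideal sigma tau = two_sided_ideal (yb_relations sigma tau)"

definition eqA ::
  "('x \<Rightarrow> 'x \<Rightarrow> 'x) \<Rightarrow> ('x \<Rightarrow> 'x \<Rightarrow> 'x) \<Rightarrow> ('x ybgen, 'k::field) free_alg \<Rightarrow> ('x ybgen, 'k) free_alg \<Rightarrow> bool" where
  "eqA sigma tau p q \<longleftrightarrow> p - q \<in> yb_ideal sigma tau"

end

theory Submission
  imports Defs
begin

text \<open>In the algebra, w_a h_b = h_{\<sigma>_a(b)} w_a with w_a invertible, so conjugation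
  by w_a sends h_b to h_{\<sigma>_a(b)}. Conjugating h_c by the invertible element
  w_a w_b = w_{\<sigma>_a(b)} w_{\<tau>_b(a)} according to its two factorisations yields both
  h_{\<sigma>_a(\<sigma>_b(c))} and h_{\<sigma>_{\<sigma>_a(b)}(\<sigma>_{\<tau>_b(a)}(c))}, which are therefore equal.
  Since conjugation is injective, \<sigma>_a(b) = \<sigma>_a(c) forces h_b = h_c; when b \<mapsto> h_b is
  injective, this gives the braid identity for \<sigma> and the injectivity of each \<sigma>_a.\<close>

lemma two_sided_ideal_mult_left: "x \<in> two_sided_ideal R \<Longrightarrow> a * x \<in> two_sided_ideal R"
  using two_sided_ideal.mult[of x R a 1] by simp

lemma two_sided_ideal_mult_right: "x \<in> two_sided_ideal R \<Longrightarrow> x * b \<in> two_sided_ideal R"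
  using two_sided_ideal.mult[of x R 1 b] by simp

lemma two_sided_ideal_uminus: "x \<in> two_sided_ideal R \<Longrightarrow> - x \<in> two_sided_ideal R"
  using two_sided_ideal_mult_left[of x R "- 1"] by simp

lemma eqA_refl: "eqA s t p p"
  unfolding eqA_def yb_ideal_def by (simp add: two_sided_ideal.zero)

lemma eqA_sym: "eqA s t p q \<Longrightarrow> eqA s t q p"
  unfolding eqA_def yb_ideal_def using two_sided_ideal_uminus[of "p - q"] by simp

lemma eqA_trans [trans]: "eqA s t p q \<Longrightarrow> eqA s t q r \<Longrightarrow> eqA s t p r"
  unfolding eqA_def yb_ideal_def using two_sided_ideal.add[of "p - q" _ "q - r"] by simp

lemma eqA_mult: "eqA s t p p' \<Longrightarrow> eqA s t q q' \<Longrightarrow> eqA s t (p * q) (p' * q')"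
proof -
  assume "eqA s t p p'" and "eqA s t q q'"
  then have "p * (q - q') + (p - p') * q' \<in> yb_ideal s t"
    unfolding eqA_def yb_ideal_def
    by (intro two_sided_ideal.add two_sided_ideal_mult_left two_sided_ideal_mult_right)
  moreover have "p * q - p' * q' = p * (q - q') + (p - p') * q'"
    by (simp add: algebra_simps)
  ultimately show ?thesis unfolding eqA_def by simp
qed

lemma eqA_mult_left: "eqA s t q q' \<Longrightarrow> eqA s t (p * q) (p * q')"
  using eqA_mult eqA_refl by blast

lemma eqA_mult_right: "eqA s t p p' \<Longrightarrow> eqA s t (p * q) (p' * q)"
  using eqA_mult eqA_refl by blast

lemma eqA_if_relation: "p - q \<in> yb_relations s t \<Longrightarrow> eqA s t p q"
  unfolding eqA_def yb_ideal_def by (rule two_sided_ideal.base)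

lemma eqA_wA_hA: "eqA s t (wA a * hA b) (hA (s a b) * wA a :: ('x ybgen, 'k::field) free_alg)"
  by (rule eqA_if_relation) (auto simp: yb_relations_def)

lemma eqA_wA_wA: "eqA s t (wA a * wA b) (wA (s a b) * wA (t b a) :: ('x ybgen, 'k::field) free_alg)"
  by (rule eqA_if_relation) (auto simp: yb_relations_def)

lemma eqA_wA_wiA: "eqA s t (wA a * wiA a) (1 :: ('x ybgen, 'k::field) free_alg)"
  by (rule eqA_if_relation) (auto simp: yb_relations_def)

lemma eqA_wiA_wA: "eqA s t (wiA a * wA a) (1 :: ('x ybgen, 'k::field) free_alg)"
  by (rule eqA_if_relation) (auto simp: yb_relations_def)

lemma eqA_intertwine_mult:
  assumes "eqA s t (u * x) (y * u)" and "eqA s t (u' * y) (z * u')"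
  shows "eqA s t ((u' * u) * x) (z * (u' * u))"
proof -
  have "(u' * u) * x = u' * (u * x)" by (simp add: mult.assoc)
  also have "eqA s t \<dots> (u' * (y * u))" using assms(1) by (rule eqA_mult_left)
  also have "u' * (y * u) = (u' * y) * u" by (simp add: mult.assoc)
  also have "eqA s t \<dots> ((z * u') * u)" using assms(2) by (rule eqA_mult_right)
  also have "(z * u') * u = z * (u' * u)" by (simp add: mult.assoc)
  finally show ?thesis .
qed

lemma eqA_intertwine_cong:
  assumes "eqA s t u u'" and "eqA s t (u' * x) (y * u')"
  shows "eqA s t (u * x) (y * u)"
proof -
  have "eqA s t (u * x) (u' * x)" using assms(1) by (rule eqA_mult_right)
  also have "eqA s t \<dots> (y * u')" by (fact assms(2))
  also have "eqA s t \<dots> (y * u)" using eqA_sym[OF assms(1)] by (rule eqA_mult_left)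
  finally show ?thesis .
qed

lemma eqA_intertwined_unique:
  assumes "eqA s t (u * v) 1" and "eqA s t (u * x) (y * u)" and "eqA s t (u * x) (z * u)"
  shows "eqA s t y z"
proof -
  have "y = y * 1" by simp
  also have "eqA s t \<dots> (y * (u * v))" using eqA_sym[OF assms(1)] by (rule eqA_mult_left)
  also have "y * (u * v) = (y * u) * v" by (simp add: mult.assoc)
  also have "eqA s t \<dots> ((z * u) * v)"
    using eqA_trans[OF eqA_sym[OF assms(2)] assms(3)] by (rule eqA_mult_right)
  also have "(z * u) * v = z * (u * v)" by (simp add: mult.assoc)
  also have "eqA s t \<dots> (z * 1)" using assms(1) by (rule eqA_mult_left)
  finally show ?thesis by simp
qed

lemma eqA_intertwined_cancel:
  assumes "eqA s t (v * u) 1" and "eqA s t (u * x) (y * u)" and "eqA s t (u * x') (y * u)"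
  shows "eqA s t x x'"
proof -
  have "x = 1 * x" by simp
  also have "eqA s t \<dots> ((v * u) * x)" using eqA_sym[OF assms(1)] by (rule eqA_mult_right)
  also have "(v * u) * x = v * (u * x)" by (simp add: mult.assoc)
  also have "eqA s t \<dots> (v * (u * x'))"
    using eqA_trans[OF assms(2) eqA_sym[OF assms(3)]] by (rule eqA_mult_left)
  also have "v * (u * x') = (v * u) * x'" by (simp add: mult.assoc)
  also have "eqA s t \<dots> (1 * x')" using assms(1) by (rule eqA_mult_right)
  finally show ?thesis by simp
qed

lemma eqA_wA_wA_wiA_wiA:
  "eqA s t ((wA a * wA b) * (wiA b * wiA a)) (1 :: ('x ybgen, 'k::field) free_alg)"
proof -
  have "(wA a * wA b) * (wiA b * wiA a) = wA a * (wA b * wiA b) * wiA a"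
    by (simp add: mult.assoc)
  also have "eqA s t \<dots> (wA a * 1 * wiA a)" by (intro eqA_mult_right eqA_mult_left eqA_wA_wiA)
  also have "eqA s t (wA a * 1 * wiA a) 1" using eqA_wA_wiA by simp
  finally show ?thesis .
qed

lemma eqA_wA_wA_hA:
  "eqA s t ((wA a * wA b) * hA c) (hA (s a (s b c)) * (wA a * wA b) :: ('x ybgen, 'k::field) free_alg)"
  by (rule eqA_intertwine_mult[OF eqA_wA_hA eqA_wA_hA])

lemma eqA_hA_sigma_braid:
  "eqA s t (hA (s (s a b) (s (t b a) c))) (hA (s a (s b c)) :: ('x ybgen, 'k::field) free_alg)"
proof (rule eqA_intertwined_unique)
  show "eqA s t ((wA a * wA b) * (wiA b * wiA a)) 1" by (rule eqA_wA_wA_wiA_wiA)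
  show "eqA s t ((wA a * wA b) * hA c) (hA (s a (s b c)) * (wA a * wA b))"
    by (rule eqA_wA_wA_hA)
  show "eqA s t ((wA a * wA b) * hA c) (hA (s (s a b) (s (t b a) c)) * (wA a * wA b))"
    by (rule eqA_intertwine_cong[OF eqA_wA_wA eqA_wA_wA_hA])
qed

lemma eqA_hA_if_sigma_eq:
  assumes "s a b = s a c"
  shows "eqA s t (hA b) (hA c :: ('x ybgen, 'k::field) free_alg)"
proof (rule eqA_intertwined_cancel)
  show "eqA s t (wiA a * wA a) 1" by (rule eqA_wiA_wA)
  show "eqA s t (wA a * hA b) (hA (s a b) * wA a)" by (rule eqA_wA_hA)
  show "eqA s t (wA a * hA c) (hA (s a b) * wA a)" unfolding assms by (rule eqA_wA_hA)
qed

theorem proposition2p2: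
  fixes sigma tau :: "'x \<Rightarrow> 'x \<Rightarrow> 'x"
  shows "(\<forall>a b c. eqA sigma tau
            (hA (sigma (sigma a b) (sigma (tau b a) c)) :: ('x ybgen, 'k::field) free_alg)
            (hA (sigma a (sigma b c))))
    \<and> ((\<forall>a b. eqA sigma tau (hA a :: ('x ybgen, 'k) free_alg) (hA b) \<longrightarrow> a = b) \<longrightarrow>
         (\<forall>a b c. sigma a (sigma b c) = sigma (sigma a b) (sigma (tau b a) c))
         \<and> (\<forall>a. inj (sigma a)))"
proof (intro conjI allI impI)
  fix a b c
  show "eqA sigma tau
          (hA (sigma (sigma a b) (sigma (tau b a) c)) :: ('x ybgen, 'k) free_alg)
          (hA (sigma a (sigma b c)))"
    by (rule eqA_hA_sigma_braid)
next
  fix a b c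
  assume hA_inj: "\<forall>a b. eqA sigma tau (hA a :: ('x ybgen, 'k) free_alg) (hA b) \<longrightarrow> a = b"
  have "eqA sigma tau (hA (sigma a (sigma b c)) :: ('x ybgen, 'k) free_alg)
          (hA (sigma (sigma a b) (sigma (tau b a) c)))"
    by (rule eqA_sym[OF eqA_hA_sigma_braid])
  with hA_inj show "sigma a (sigma b c) = sigma (sigma a b) (sigma (tau b a) c)" by blast
next
  fix a
  assume hA_inj: "\<forall>a b. eqA sigma tau (hA a :: ('x ybgen, 'k) free_alg) (hA b) \<longrightarrow> a = b"
  show "inj (sigma a)"
  proof (rule injI)
    fix x y
    assume "sigma a x = sigma a y"
    then have "eqA sigma tau (hA x :: ('x ybgen, 'k) free_alg) (hA y)"
      by (rule eqA_hA_if_sigma_eq)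
    with hA_inj show "x = y" by blast
  qed
qed

end
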